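(* Let $P_0,P_1,P_2$ be jointly distributed nonnegative random variables with $\mathbb E[P_1]>0$, and let $0<\varepsilon\le 1/10$. If $\mathbb E[P_0]\le\varepsilon$, $\mathbb E[P_1]\ge 1-\varepsilon$ and $\mathbb E[P_2]\le 1$, then there exists an outcome $o$ such that $P_0(o)\le\delta\cdot P_1(o)$, $P_2(o)\le(1+\delta)\cdot P_1(o)$, and $P_1(o)>0$, where $\delta=2\sqrt{\varepsilon}$. *)

theory Defs
  imports "HOL-Probability.Probability"
begin

end

theory Submission
  imports Defs
begin

text \<open>If no outcome is good, then at every outcome \<open>P\<^sub>1 = 0\<close>, \<open>P\<^sub>0 > \<delta> P\<^sub>1\<close> or
  \<open>P\<^sub>2 > (1 + \<delta>) P\<^sub>1\<close>, and in each case \<open>(1 + \<delta>) P\<^sub>1 \<le> P\<^sub>2 + ((1 + \<delta>) / \<delta>) P\<^sub>0\<close>.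
  Integrating gives \<open>(1 + \<delta>)(1 - \<epsilon>) \<le> 1 + (1 + \<delta>) \<epsilon> / \<delta>\<close>; with \<open>\<delta> = 2s\<close>, \<open>s = \<surd>\<epsilon>\<close>
  this says \<open>3s/2 \<le> 2s\<^sup>2 + 2s\<^sup>3\<close>, which is false for \<open>0 < s < 1/2\<close>.\<close>

lemma le_of_not_ratio_bounds:
  fixes p0 p1 p2 d :: real
  assumes "0 \<le> p0" "0 \<le> p1" "0 \<le> p2" "0 < d"
    and "\<not> (p0 \<le> d * p1 \<and> p2 \<le> (1 + d) * p1 \<and> 0 < p1)"
  shows "(1 + d) * p1 \<le> p2 + (1 + d) / d * p0"
proof -
  have p0_term_nonneg: "0 \<le> (1 + d) / d * p0"
    using assms(1,4) by simp
  consider "p1 = 0" | "d * p1 < p0" | "(1 + d) * p1 < p2"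
    using assms by fastforce
  then show ?thesis
  proof cases
    case 2
    then have "(1 + d) / d * (d * p1) \<le> (1 + d) / d * p0"
      using assms(4) by (intro mult_left_mono) auto
    then show ?thesis
      using assms(3,4) by simp
  qed (use assms(3) p0_term_nonneg in auto)
qed

lemma exists_outcome_ratio_bounds:
  fixes M :: "'a measure" and P0 P1 P2 :: "'a \<Rightarrow> real" and a b e d :: real
  assumes "P0 \<in> borel_measurable M" "P1 \<in> borel_measurable M" "P2 \<in> borel_measurable M"
    and "\<And>x. x \<in> space M \<Longrightarrow> 0 \<le> P0 x"
    and "\<And>x. x \<in> space M \<Longrightarrow> 0 \<le> P1 x"
    and "\<And>x. x \<in> space M \<Longrightarrow> 0 \<le> P2 x"
    and "0 < d" "0 \<le> a" "0 \<le> e"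
    and "(\<integral>\<^sup>+ x. ennreal (P0 x) \<partial>M) \<le> ennreal a"
    and "ennreal b \<le> (\<integral>\<^sup>+ x. ennreal (P1 x) \<partial>M)"
    and "(\<integral>\<^sup>+ x. ennreal (P2 x) \<partial>M) \<le> ennreal e"
    and "e + (1 + d) / d * a < (1 + d) * b"
  shows "\<exists>\<omega>\<in>space M. P0 \<omega> \<le> d * P1 \<omega> \<and> P2 \<omega> \<le> (1 + d) * P1 \<omega> \<and> 0 < P1 \<omega>"
proof (rule ccontr)
  assume no_good: "\<not> ?thesis"
  define c where "c = (1 + d) / d"
  have "0 \<le> c"
    using \<open>0 < d\<close> by (simp add: c_def)
  have "0 \<le> c * a"
    using \<open>0 \<le> c\<close> \<open>0 \<le> a\<close> by simp
  then have "0 < (1 + d) * b"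
    using assms(9,13) unfolding c_def by linarith
  then have "0 \<le> b"
    using \<open>0 < d\<close> by (auto simp: zero_less_mult_iff)
  have "ennreal ((1 + d) * b) = ennreal (1 + d) * ennreal b"
    using \<open>0 < d\<close> \<open>0 \<le> b\<close> by (simp add: ennreal_mult)
  also have "\<dots> \<le> ennreal (1 + d) * (\<integral>\<^sup>+ x. ennreal (P1 x) \<partial>M)"
    using assms(11) by (intro mult_left_mono) auto
  also have "\<dots> = (\<integral>\<^sup>+ x. ennreal (1 + d) * ennreal (P1 x) \<partial>M)"
    using assms(2) by (simp add: nn_integral_cmult)
  also have "\<dots> = (\<integral>\<^sup>+ x. ennreal ((1 + d) * P1 x) \<partial>M)"
    using \<open>0 < d\<close> assms(5) by (intro nn_integral_cong) (simp add: ennreal_mult)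
  also have "\<dots> \<le> (\<integral>\<^sup>+ x. ennreal (P2 x + c * P0 x) \<partial>M)"
    using no_good \<open>0 < d\<close> assms(4-6) unfolding c_def
    by (intro nn_integral_mono ennreal_leI le_of_not_ratio_bounds) auto
  also have "\<dots> = (\<integral>\<^sup>+ x. ennreal (P2 x) + ennreal c * ennreal (P0 x) \<partial>M)"
    using \<open>0 \<le> c\<close> assms(4,6) by (intro nn_integral_cong) (simp add: ennreal_mult ennreal_plus)
  also have "\<dots> = (\<integral>\<^sup>+ x. ennreal (P2 x) \<partial>M) + ennreal c * (\<integral>\<^sup>+ x. ennreal (P0 x) \<partial>M)"
    using assms(1,3) by (simp add: nn_integral_add nn_integral_cmult)
  also have "\<dots> \<le> ennreal e + ennreal c * ennreal a"
    using assms(10,12) by (intro add_mono mult_left_mono) auto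
  also have "\<dots> = ennreal (e + c * a)"
    using \<open>0 \<le> c\<close> \<open>0 \<le> a\<close> \<open>0 \<le> e\<close> by (simp add: ennreal_mult ennreal_plus)
  finally have "(1 + d) * b \<le> e + c * a"
    using \<open>0 \<le> c * a\<close> \<open>0 \<le> e\<close> by (subst (asm) ennreal_le_iff) auto
  then show False
    using assms(13) by (simp add: c_def)
qed

lemma two_sqrt_margin:
  fixes \<epsilon> :: real
  assumes "0 < \<epsilon>" "\<epsilon> < 1/4"
  shows "1 + (1 + 2 * sqrt \<epsilon>) / (2 * sqrt \<epsilon>) * \<epsilon> < (1 + 2 * sqrt \<epsilon>) * (1 - \<epsilon>)"
proof -
  define s where "s = sqrt \<epsilon>"
  have "0 < s" and \<epsilon>_eq: "\<epsilon> = s * s"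
    using assms(1) by (simp_all add: s_def)
  have "s * s < 1/4"
    using assms(2) \<epsilon>_eq by simp
  with \<open>0 < s\<close> have "s < 1/2"
    using mult_mono[of "1/2" s "1/2" s] by fastforce
  then have "s * s < 1/2 * s"
    using \<open>0 < s\<close> by (intro mult_strict_right_mono)
  with \<open>s < 1/2\<close> \<open>0 < s\<close> have "s * (2 * (s * s) + 2 * s) < s * (3/2)"
    by (intro mult_strict_left_mono) linarith+
  moreover have ratio_eq: "(1 + 2 * s) / (2 * s) * (s * s) = (1 + 2 * s) * s / 2"
    using \<open>0 < s\<close> by (simp add: field_simps)
  ultimately have "1 + (1 + 2 * s) / (2 * s) * (s * s) < (1 + 2 * s) * (1 - s * s)"
    unfolding ratio_eq by (simp add: field_simps)
  then show ?thesis
    unfolding s_def[symmetric] using \<epsilon>_eq by simp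
qed

theorem fact3p2:
  fixes M :: "'a measure" and P0 P1 P2 :: "'a \<Rightarrow> real" and \<epsilon> :: real
  assumes "prob_space M"
    and "P0 \<in> borel_measurable M" and "P1 \<in> borel_measurable M" and "P2 \<in> borel_measurable M"
    and "\<And>x. x \<in> space M \<Longrightarrow> P0 x \<ge> 0"
    and "\<And>x. x \<in> space M \<Longrightarrow> P1 x \<ge> 0"
    and "\<And>x. x \<in> space M \<Longrightarrow> P2 x \<ge> 0"
    and "(\<integral>\<^sup>+ x. ennreal (P1 x) \<partial>M) > 0"
    and "0 < \<epsilon>" and "\<epsilon> \<le> 1/10"
    and "(\<integral>\<^sup>+ x. ennreal (P0 x) \<partial>M) \<le> ennreal \<epsilon>"
    and "(\<integral>\<^sup>+ x. ennreal (P1 x) \<partial>M) \<ge> ennreal (1 - \<epsilon>)"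
    and "(\<integral>\<^sup>+ x. ennreal (P2 x) \<partial>M) \<le> 1"
  shows "\<exists>\<omega>\<in>space M. P0 \<omega> \<le> (2 * sqrt \<epsilon>) * P1 \<omega>
            \<and> P2 \<omega> \<le> (1 + 2 * sqrt \<epsilon>) * P1 \<omega> \<and> P1 \<omega> > 0"
  using assms(2-7,9,11-13) two_sqrt_margin[of \<epsilon>] assms(10)
  by (intro exists_outcome_ratio_bounds[where a = \<epsilon> and b = "1 - \<epsilon>" and e = 1]) auto

end
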